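(* Let $M$ be a $*$-left Ehresmann monoid with $M=\langle H\rangle_{(2)}$ for an atomic subset $H$. If $m=h_1h_2\cdots h_n$ with $h_i\in H$ for $1\le i\le n$, then $m$ has an expression $m=k_1\cdots k_p$ in $H$-canonical form with $p\le n$.
   Context: A $*$-left Ehresmann monoid is a monoid $M$ with unary operations $+,*$ such that $x^+x=x$, $(x^+y^+)^+=x^+y^+$, $x^+y^+=y^+x^+$, $(xy)^+=(xy^+)^+$, $xx^*=x$, $(x^* )^*=x^*$, $x^*y^*=y^*x^*$, $(xy^* )^*y^*=(xy^* )^*$, $(x^* )^+=x^*$, $(x^+)^*=x^+$. Projections: $E=\{a^+\}=\{a^*\}$, ordered by $e\le f$ iff $ef=e$; $\sigma$ is the least monoid congruence containing $E\times E$; $\langle H\rangle_{(2)}$ is the subsemigroup generated by $H$. $H$ is atomic if: (H1) $E\subseteq H$; (H2) $h\in H,e\in E$ imply $he\in H$ and $(he)^*=h^*e$; (H3) if $h\in H$, $k\in H\setminus E$, $h^*\ge k^+$ then $hk\in H$ and $(hk)^*=k^*$; (H4) every $m\in M$ is $\sigma$-related to some $h\in H$; (H5) if $h,k,w\in H$, $hk\,\sigma\,w$ and $k^*=w^*$, then some $u\in H$ has $u\,\sigma\,h$ and $u^*\ge k^+$. An expression $m=h_1\cdots h_n$ ($n\ge1$, $h_i\in H$) is in $H$-canonical form if $h_i^*<h_{i+1}^+$ for $1\le i<n$ and $h_i\notin E$ for $2\le i\le n$. *)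

theory Defs
  imports Main
begin

text \<open>A *-left Ehresmann monoid on the whole type 'a, given by multiplication mul,
identity one, and unary operations pl (the plus) and st (the star).\<close>

definition star_left_ehresmann ::
  "('a \<Rightarrow> 'a \<Rightarrow> 'a) \<Rightarrow> 'a \<Rightarrow> ('a \<Rightarrow> 'a) \<Rightarrow> ('a \<Rightarrow> 'a) \<Rightarrow> bool" where
  "star_left_ehresmann mul one pl st \<longleftrightarrow>
     (\<forall>x y z. mul (mul x y) z = mul x (mul y z)) \<and>
     (\<forall>x. mul one x = x \<and> mul x one = x) \<and>
     (\<forall>x. mul (pl x) x = x) \<and>
     (\<forall>x y. pl (mul (pl x) (pl y)) = mul (pl x) (pl y)) \<and>
     (\<forall>x y. mul (pl x) (pl y) = mul (pl y) (pl x)) \<and>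
     (\<forall>x y. pl (mul x y) = pl (mul x (pl y))) \<and>
     (\<forall>x. mul x (st x) = x) \<and>
     (\<forall>x. st (st x) = st x) \<and>
     (\<forall>x y. mul (st x) (st y) = mul (st y) (st x)) \<and>
     (\<forall>x y. mul (st (mul x (st y))) (st y) = st (mul x (st y))) \<and>
     (\<forall>x. pl (st x) = st x) \<and>
     (\<forall>x. st (pl x) = pl x)"

definition projections :: "('a \<Rightarrow> 'a) \<Rightarrow> 'a set" where
  "projections pl = {e. \<exists>a. e = pl a}"

definition proj_le :: "('a \<Rightarrow> 'a \<Rightarrow> 'a) \<Rightarrow> 'a \<Rightarrow> 'a \<Rightarrow> bool" where
  "proj_le mul e f \<longleftrightarrow> mul e f = e"

definition proj_less :: "('a \<Rightarrow> 'a \<Rightarrow> 'a) \<Rightarrow> 'a \<Rightarrow> 'a \<Rightarrow> bool" where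
  "proj_less mul e f \<longleftrightarrow> proj_le mul e f \<and> e \<noteq> f"

definition monoid_congruence :: "('a \<Rightarrow> 'a \<Rightarrow> 'a) \<Rightarrow> ('a \<times> 'a) set \<Rightarrow> bool" where
  "monoid_congruence mul R \<longleftrightarrow> equiv UNIV R \<and>
     (\<forall>a b c. (a, b) \<in> R \<longrightarrow> (mul c a, mul c b) \<in> R \<and> (mul a c, mul b c) \<in> R)"

definition sigma :: "('a \<Rightarrow> 'a \<Rightarrow> 'a) \<Rightarrow> ('a \<Rightarrow> 'a) \<Rightarrow> 'a \<Rightarrow> 'a \<Rightarrow> bool" where
  "sigma mul pl x y \<longleftrightarrow>
     (\<forall>R. monoid_congruence mul R \<and> projections pl \<times> projections pl \<subseteq> R \<longrightarrow> (x, y) \<in> R)"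

inductive_set subsemigroup_gen :: "('a \<Rightarrow> 'a \<Rightarrow> 'a) \<Rightarrow> 'a set \<Rightarrow> 'a set"
  for mul :: "'a \<Rightarrow> 'a \<Rightarrow> 'a" and H :: "'a set" where
  gen: "h \<in> H \<Longrightarrow> h \<in> subsemigroup_gen mul H"
| mult: "a \<in> subsemigroup_gen mul H \<Longrightarrow> b \<in> subsemigroup_gen mul H \<Longrightarrow>
           mul a b \<in> subsemigroup_gen mul H"

definition atomic ::
  "('a \<Rightarrow> 'a \<Rightarrow> 'a) \<Rightarrow> ('a \<Rightarrow> 'a) \<Rightarrow> ('a \<Rightarrow> 'a) \<Rightarrow> 'a set \<Rightarrow> bool" where
  "atomic mul pl st H \<longleftrightarrow>
     projections pl \<subseteq> H \<and>
     (\<forall>h e. h \<in> H \<and> e \<in> projections pl \<longrightarrow>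
        mul h e \<in> H \<and> st (mul h e) = mul (st h) e) \<and>
     (\<forall>h k. h \<in> H \<and> k \<in> H - projections pl \<and> proj_le mul (pl k) (st h) \<longrightarrow>
        mul h k \<in> H \<and> st (mul h k) = st k) \<and>
     (\<forall>m. \<exists>h\<in>H. sigma mul pl m h) \<and>
     (\<forall>h k w. h \<in> H \<and> k \<in> H \<and> w \<in> H \<and> sigma mul pl (mul h k) w \<and> st k = st w \<longrightarrow>
        (\<exists>u\<in>H. sigma mul pl u h \<and> proj_le mul (pl k) (st u)))"

fun lprod :: "('a \<Rightarrow> 'a \<Rightarrow> 'a) \<Rightarrow> 'a \<Rightarrow> 'a list \<Rightarrow> 'a" where
  "lprod mul one [] = one"
| "lprod mul one [h] = h"
| "lprod mul one (h # hs) = mul h (lprod mul one hs)"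

definition canonical_form ::
  "('a \<Rightarrow> 'a \<Rightarrow> 'a) \<Rightarrow> ('a \<Rightarrow> 'a) \<Rightarrow> ('a \<Rightarrow> 'a) \<Rightarrow> 'a set \<Rightarrow> 'a list \<Rightarrow> bool" where
  "canonical_form mul pl st H ks \<longleftrightarrow>
     ks \<noteq> [] \<and> set ks \<subseteq> H \<and>
     (\<forall>i. i + 1 < length ks \<longrightarrow> proj_less mul (st (ks ! i)) (pl (ks ! (i + 1)))) \<and>
     (\<forall>i. 1 \<le> i \<and> i < length ks \<longrightarrow> ks ! i \<notin> projections pl)"

end

theory Submission
  imports Defs
begin

text \<open>Induct on \<open>n\<close>, multiplying a canonical form \<open>k\<^sub>1 \<cdots> k\<^sub>p\<close> of
\<open>h\<^sub>2 \<cdots> h\<^sub>n\<close> on the left by \<open>h = h\<^sub>1\<close>. If \<open>k\<^sub>1\<close> is a projection,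
or \<open>k\<^sub>1\<^sup>+ \<le> h\<^sup>*\<close>, then (H2) resp. (H3) merge \<open>h\<close> into the first factor
\<open>h k\<^sub>1 \<in> H\<close> without enlarging its star, so the form stays canonical. Otherwise
\<open>e = h\<^sup>* k\<^sub>1\<^sup>+ < k\<^sub>1\<^sup>+\<close>, and \<open>h e\<close>, which lies in \<open>H\<close> with star \<open>e\<close> by (H2),
becomes a new first factor, because \<open>h e k\<^sub>1 = h k\<^sub>1\<close>.\<close>

lemma canonical_form_singleton: "canonical_form mul pl st H [k] \<longleftrightarrow> k \<in> H"
  by (simp add: canonical_form_def)

lemma canonical_form_Cons_Cons:
  "canonical_form mul pl st H (k # k' # ks) \<longleftrightarrow>
     k \<in> H \<and> proj_less mul (st k) (pl k') \<and> k' \<notin> projections pl \<and>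
     canonical_form mul pl st H (k' # ks)"
  unfolding canonical_form_def
  by (auto simp: less_Suc_eq_0_disj le_Suc_eq nth_Cons split: nat.splits)

locale star_left_ehresmann_monoid =
  fixes mul :: "'a \<Rightarrow> 'a \<Rightarrow> 'a" (infixl "\<cdot>" 70) and one :: 'a and pl st :: "'a \<Rightarrow> 'a"
  assumes star_left_ehresmann: "star_left_ehresmann mul one pl st"
begin

abbreviation E :: "'a set" where "E \<equiv> projections pl"

abbreviation proj_le_syntax :: "'a \<Rightarrow> 'a \<Rightarrow> bool" (infix "\<preceq>" 50)
  where "e \<preceq> f \<equiv> proj_le mul e f"

abbreviation proj_less_syntax :: "'a \<Rightarrow> 'a \<Rightarrow> bool" (infix "\<prec>" 50)
  where "e \<prec> f \<equiv> proj_less mul e f"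

lemma assoc: "x \<cdot> y \<cdot> z = x \<cdot> (y \<cdot> z)"
  and plus_mult_self: "pl x \<cdot> x = x"
  and plus_mult_plus: "pl (pl x \<cdot> pl y) = pl x \<cdot> pl y"
  and plus_mult_comm: "pl x \<cdot> pl y = pl y \<cdot> pl x"
  and mult_star_self: "x \<cdot> st x = x"
  and plus_star: "pl (st x) = st x"
  and star_plus: "st (pl x) = pl x"
  using star_left_ehresmann unfolding star_left_ehresmann_def by blast+

lemma plus_in_projections: "pl x \<in> E"
  unfolding projections_def by blast

lemma star_in_projections: "st x \<in> E"
  using plus_in_projections[of "st x"] by (simp only: plus_star)

lemma projections_star_eq: "e \<in> E \<Longrightarrow> st e = e"
  unfolding projections_def by (auto simp: star_plus)

lemma projections_plus_eq: "e \<in> E \<Longrightarrow> pl e = e"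
  by (metis projections_star_eq plus_star)

lemma projections_idem: "e \<in> E \<Longrightarrow> e \<cdot> e = e"
  by (metis projections_plus_eq plus_mult_self)

lemma projections_comm: "e \<in> E \<Longrightarrow> f \<in> E \<Longrightarrow> e \<cdot> f = f \<cdot> e"
  by (metis projections_plus_eq plus_mult_comm)

lemma projections_mult_closed: "e \<in> E \<Longrightarrow> f \<in> E \<Longrightarrow> e \<cdot> f \<in> E"
  by (metis projections_plus_eq plus_mult_plus plus_in_projections)

lemma mult_star_mult: "x \<cdot> (st x \<cdot> y) = x \<cdot> y"
  by (metis assoc mult_star_self)

lemma proj_le_mult_left: "e \<in> E \<Longrightarrow> f \<in> E \<Longrightarrow> e \<cdot> f \<preceq> f"
  unfolding proj_le_def by (simp add: assoc projections_idem)

lemma proj_le_less_trans: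
  assumes "e \<in> E" "f \<in> E" "g \<in> E" "e \<preceq> f" "f \<prec> g"
  shows "e \<prec> g"
proof -
  have "e \<cdot> g = e"
    using assms unfolding proj_less_def proj_le_def by (metis assoc)
  moreover have "e \<noteq> g"
    using assms projections_comm unfolding proj_less_def proj_le_def by metis
  ultimately show ?thesis
    unfolding proj_less_def proj_le_def by blast
qed

lemma lprod_Cons_mult: "lprod mul one (x \<cdot> y # ys) = x \<cdot> lprod mul one (y # ys)"
  by (cases ys) (simp_all add: assoc)

lemma lprod_new_head:
  "lprod mul one (h \<cdot> (st h \<cdot> pl k) # k # ks) = h \<cdot> lprod mul one (k # ks)"
proof -
  have "lprod mul one (h \<cdot> (st h \<cdot> pl k) # k # ks) = h \<cdot> (st h \<cdot> lprod mul one (pl k \<cdot> k # ks))"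
    by (simp add: assoc lprod_Cons_mult)
  then show ?thesis
    by (simp add: plus_mult_self mult_star_mult)
qed

lemma canonical_form_replace_head:
  assumes "canonical_form mul pl st H (k # ks)" "k' \<in> H" "st k' \<preceq> st k"
  shows "canonical_form mul pl st H (k' # ks)"
proof (cases ks)
  case Nil
  with assms(2) show ?thesis
    by (simp add: canonical_form_singleton)
next
  case (Cons k2 ks')
  with assms show ?thesis
    using proj_le_less_trans[OF star_in_projections star_in_projections plus_in_projections]
    by (auto simp: canonical_form_Cons_Cons)
qed

end

text \<open>Axioms (H2) and (H3) of atomicity. The canonical form argument uses no other axiom
of atomicity, nor the hypothesis that \<open>H\<close> generates \<open>M\<close>.\<close>

locale atomic_core = star_left_ehresmann_monoid +
  fixes H :: "'a set"
  assumes mult_projection_closed: "h \<in> H \<Longrightarrow> e \<in> E \<Longrightarrow> h \<cdot> e \<in> H"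
    and star_mult_projection: "h \<in> H \<Longrightarrow> e \<in> E \<Longrightarrow> st (h \<cdot> e) = st h \<cdot> e"
    and mult_matching_closed:
      "h \<in> H \<Longrightarrow> k \<in> H \<Longrightarrow> k \<notin> E \<Longrightarrow> pl k \<preceq> st h \<Longrightarrow> h \<cdot> k \<in> H"
    and star_mult_matching:
      "h \<in> H \<Longrightarrow> k \<in> H \<Longrightarrow> k \<notin> E \<Longrightarrow> pl k \<preceq> st h \<Longrightarrow> st (h \<cdot> k) = st k"
begin

lemma canonical_form_merge_head:
  assumes h: "h \<in> H" and K: "canonical_form mul pl st H (k # ks)"
    and merge: "k \<in> E \<or> pl k \<preceq> st h"
  shows "canonical_form mul pl st H (h \<cdot> k # ks)"
proof -
  have k: "k \<in> H"
    using K unfolding canonical_form_def by simp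
  from merge consider (projection) "k \<in> E" | (matching) "k \<notin> E" "pl k \<preceq> st h"
    by blast
  then have "h \<cdot> k \<in> H \<and> st (h \<cdot> k) \<preceq> st k"
  proof cases
    case projection
    then show ?thesis
      using mult_projection_closed[OF h] star_mult_projection[OF h] projections_star_eq
        proj_le_mult_left[OF star_in_projections] by simp
  next
    case matching
    then show ?thesis
      using mult_matching_closed[OF h k] star_mult_matching[OF h k]
        projections_idem[OF star_in_projections]
      unfolding proj_le_def by simp
  qed
  then show ?thesis
    using canonical_form_replace_head[OF K] by blast
qed

lemma canonical_form_new_head:
  assumes h: "h \<in> H" and K: "canonical_form mul pl st H (k # ks)"
    and k: "k \<notin> E" and not_le: "\<not> pl k \<preceq> st h"
  shows "canonical_form mul pl st H (h \<cdot> (st h \<cdot> pl k) # k # ks)"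
proof -
  define e where "e = st h \<cdot> pl k"
  have e: "e \<in> E"
    unfolding e_def by (intro projections_mult_closed star_in_projections plus_in_projections)
  have "st (h \<cdot> e) = st h \<cdot> e"
    by (rule star_mult_projection[OF h e])
  also have "\<dots> = e"
    unfolding e_def by (simp flip: assoc add: projections_idem[OF star_in_projections])
  moreover have "e \<preceq> pl k"
    unfolding e_def by (intro proj_le_mult_left star_in_projections plus_in_projections)
  moreover have "e \<noteq> pl k"
  proof
    assume "e = pl k"
    then have "pl k \<preceq> st h"
      unfolding e_def proj_le_def
      by (metis projections_comm star_in_projections plus_in_projections)
    with not_le show False ..
  qed
  ultimately show ?thesis
    using K k mult_projection_closed[OF h e]
    unfolding e_def[symmetric] by (simp add: canonical_form_Cons_Cons proj_less_def)
qed

lemma canonical_form_mult_left: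
  assumes h: "h \<in> H" and ks: "canonical_form mul pl st H ks"
  shows "\<exists>ks'. canonical_form mul pl st H ks' \<and> lprod mul one ks' = h \<cdot> lprod mul one ks
               \<and> length ks' \<le> Suc (length ks)"
proof -
  obtain k ks0 where ks_eq: "ks = k # ks0"
    using ks unfolding canonical_form_def by (auto simp: neq_Nil_conv)
  with ks have K: "canonical_form mul pl st H (k # ks0)"
    by simp
  show ?thesis
  proof (cases "k \<in> E \<or> pl k \<preceq> st h")
    case True
    then show ?thesis
      using canonical_form_merge_head[OF h K]
      by (intro exI[of _ "h \<cdot> k # ks0"]) (simp add: ks_eq lprod_Cons_mult)
  next
    case False
    then show ?thesis
      using canonical_form_new_head[OF h K]
      by (intro exI[of _ "h \<cdot> (st h \<cdot> pl k) # k # ks0"]) (simp add: ks_eq lprod_new_head del: lprod.simps(3))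
  qed
qed

lemma canonical_form_exists:
  assumes "hs \<noteq> []" "set hs \<subseteq> H"
  shows "\<exists>ks. canonical_form mul pl st H ks \<and> lprod mul one ks = lprod mul one hs
             \<and> length ks \<le> length hs"
  using assms
proof (induction hs rule: list_nonempty_induct)
  case (single h)
  then show ?case
    by (intro exI[of _ "[h]"]) (simp add: canonical_form_singleton)
next
  case (cons h hs)
  then obtain ks where ks: "canonical_form mul pl st H ks"
    and prod: "lprod mul one ks = lprod mul one hs" and len: "length ks \<le> length hs"
    by auto
  from cons.prems canonical_form_mult_left[OF _ ks, of h] obtain ks' where
    "canonical_form mul pl st H ks'" "lprod mul one ks' = h \<cdot> lprod mul one ks"
    "length ks' \<le> Suc (length ks)"
    by auto
  with prod len cons.hyps(1) show ?case
    by (intro exI[of _ ks']) (auto simp: neq_Nil_conv)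
qed

end

lemma atomic_imp_atomic_core:
  assumes "star_left_ehresmann mul one pl st" "atomic mul pl st H"
  shows "atomic_core mul one pl st H"
  using assms unfolding atomic_core_def atomic_core_axioms_def star_left_ehresmann_monoid_def atomic_def
  by blast

theorem mainTheorem9:
  fixes mul :: "'a \<Rightarrow> 'a \<Rightarrow> 'a" and one :: 'a and pl st :: "'a \<Rightarrow> 'a"
    and H :: "'a set" and hs :: "'a list"
  assumes "star_left_ehresmann mul one pl st"
    and "atomic mul pl st H"
    and "subsemigroup_gen mul H = UNIV"
    and "hs \<noteq> []" and "set hs \<subseteq> H"
  shows "\<exists>ks. canonical_form mul pl st H ks \<and> lprod mul one ks = lprod mul one hs
             \<and> length ks \<le> length hs"
proof -
  interpret atomic_core mul one pl st H
    using atomic_imp_atomic_core[OF assms(1,2)] .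
  show ?thesis
    using canonical_form_exists[OF assms(4,5)] .
qed

end
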